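(* Let $G$ be a symmetrically factorizable algebraic group with subgroups $G_\pm$ and conjugating element $\theta$, and let $\rho(x)=(\theta x)_+^{-1}$ on $G_+$. If $\theta^2$ is central in $G$, then \[ (\rho(y))^{-1}\rho\bigl(\rho(x)(\rho(xy))^{-1}\bigr)=\rho^{-1}(x) \] on a Zariski open subset of $G_+\times G_+$, and $\rho$ is of order three, $\rho^3=\mathrm{id}$.
   Context: A Lie group $G$ with Lie algebra $\mathfrak g$ is symmetrically factorizable if $\mathfrak g=\mathfrak g_+\oplus\mathfrak g_-$ as a vector space with $\mathfrak g_\pm$ Lie subalgebras, and there is $\theta\in G$ (a conjugating element) with $\theta G_-=G_+\theta$, where $G_\pm$ are the Lie subgroups corresponding to $\mathfrak g_\pm$. For $g$ in a Zariski open dense subset one has $g=g_+g_-^{-1}$ with $g_\pm\in G_\pm$, and $(h)_\pm$ denotes these factors of $h$. *)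

theory Defs
  imports "HOL-Algebra.Algebra"
begin

text \<open>Abstract group-theoretic rendering of a symmetrically factorizable group.
  \<open>Gp\<close>, \<open>Gm\<close> play the roles of G_+ and G_-; \<open>th\<close> is the conjugating element.\<close>

definition sym_factorizable :: "('a, 'b) monoid_scheme \<Rightarrow> 'a set \<Rightarrow> 'a set \<Rightarrow> 'a \<Rightarrow> bool" where
  "sym_factorizable G Gp Gm th \<longleftrightarrow>
     group G \<and> subgroup Gp G \<and> subgroup Gm G \<and> th \<in> carrier G \<and>
     th <#\<^bsub>G\<^esub> Gm = Gp #>\<^bsub>G\<^esub> th"

definition fact_dom :: "('a, 'b) monoid_scheme \<Rightarrow> 'a set \<Rightarrow> 'a set \<Rightarrow> 'a \<Rightarrow> bool" where
  "fact_dom G Gp Gm g \<longleftrightarrow> g \<in> carrier G \<and>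
     (\<exists>!p. p \<in> Gp \<and> (\<exists>m\<in>Gm. g = p \<otimes>\<^bsub>G\<^esub> inv\<^bsub>G\<^esub> m))"

definition plus_part :: "('a, 'b) monoid_scheme \<Rightarrow> 'a set \<Rightarrow> 'a set \<Rightarrow> 'a \<Rightarrow> 'a" where
  "plus_part G Gp Gm g = (THE p. p \<in> Gp \<and> (\<exists>m\<in>Gm. g = p \<otimes>\<^bsub>G\<^esub> inv\<^bsub>G\<^esub> m))"

definition rho_dom :: "('a, 'b) monoid_scheme \<Rightarrow> 'a set \<Rightarrow> 'a set \<Rightarrow> 'a \<Rightarrow> 'a \<Rightarrow> bool" where
  "rho_dom G Gp Gm th x \<longleftrightarrow> x \<in> Gp \<and> fact_dom G Gp Gm (th \<otimes>\<^bsub>G\<^esub> x)"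

definition rho :: "('a, 'b) monoid_scheme \<Rightarrow> 'a set \<Rightarrow> 'a set \<Rightarrow> 'a \<Rightarrow> 'a \<Rightarrow> 'a" where
  "rho G Gp Gm th x = inv\<^bsub>G\<^esub> (plus_part G Gp Gm (th \<otimes>\<^bsub>G\<^esub> x))"

definition rho_inv :: "('a, 'b) monoid_scheme \<Rightarrow> 'a set \<Rightarrow> 'a set \<Rightarrow> 'a \<Rightarrow> 'a \<Rightarrow> 'a" where
  "rho_inv G Gp Gm th x = (THE z. rho_dom G Gp Gm th z \<and> rho G Gp Gm th z = x)"

end

theory Submission
  imports Defs
begin

text \<open>Conjugation by \<open>\<theta>\<close> maps \<open>G\<^sub>-\<close> into \<open>G\<^sub>+\<close>, and when \<open>\<theta>\<^sup>2\<close> is central it is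
  an involution that also maps \<open>G\<^sub>+\<close> into \<open>G\<^sub>-\<close>. If \<open>\<theta>x = p m\<^sup>-\<^sup>1\<close>, then
  \<open>\<theta>\<rho>(x) = \<theta>p\<^sup>-\<^sup>1 = (\<theta>m\<^sup>-\<^sup>1\<theta>\<^sup>-\<^sup>1)(\<theta>x\<theta>\<^sup>-\<^sup>1)\<^sup>-\<^sup>1\<close> is again such a factorization, so \<open>\<rho>\<close>
  acts on the data \<open>(x, p, m)\<close> by \<open>(x, p, m) \<mapsto> (p\<^sup>-\<^sup>1, \<theta>m\<^sup>-\<^sup>1\<theta>\<^sup>-\<^sup>1, \<theta>x\<theta>\<^sup>-\<^sup>1)\<close>; applying
  this three times returns \<open>x\<close>, hence \<open>\<rho>\<^sup>-\<^sup>1 = \<rho>\<^sup>2\<close>. For the functional equation, if also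
  \<open>\<theta>y = q n\<^sup>-\<^sup>1\<close> and \<open>\<theta>xy = r k\<^sup>-\<^sup>1\<close>, then
  \<open>\<theta>\<rho>(x)\<rho>(xy)\<^sup>-\<^sup>1 = (\<theta>m\<^sup>-\<^sup>1\<theta>\<^sup>-\<^sup>1q)(k\<^sup>-\<^sup>1n)\<^sup>-\<^sup>1\<close> (so \<open>\<rho>(x)\<rho>(xy)\<^sup>-\<^sup>1\<close> is automatically in
  the domain of \<open>\<rho>\<close>), and reading off its plus part gives
  \<open>\<rho>(y)\<^sup>-\<^sup>1\<rho>(\<rho>(x)\<rho>(xy)\<^sup>-\<^sup>1) = \<theta>m\<theta>\<^sup>-\<^sup>1 = \<rho>\<^sup>2(x)\<close>.\<close>

lemma (in group) mult_inv_cancel_left [simp]: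
  "x \<in> carrier G \<Longrightarrow> y \<in> carrier G \<Longrightarrow> x \<otimes> (inv x \<otimes> y) = y"
  by (simp add: m_assoc [symmetric])

lemma (in group) inv_mult_cancel_left [simp]:
  "x \<in> carrier G \<Longrightarrow> y \<in> carrier G \<Longrightarrow> inv x \<otimes> (x \<otimes> y) = y"
  by (simp add: m_assoc [symmetric])

lemma (in group) conj_factorization:
  assumes "a \<in> carrier G" "x \<in> carrier G" "p \<in> carrier G" "m \<in> carrier G"
    and "a \<otimes> x = p \<otimes> inv m"
  shows "a \<otimes> inv p = (a \<otimes> inv m \<otimes> inv a) \<otimes> inv (a \<otimes> x \<otimes> inv a)"
proof -
  have "p = a \<otimes> x \<otimes> m" using assms by (simp add: inv_solve_right)
  then show ?thesis using assms(1,2,4) by (simp add: m_assoc inv_mult_group)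
qed

lemma (in group) fact_dom_imp_trivial_intersection:
  assumes H: "subgroup H G" and K: "subgroup K G" and g: "fact_dom G H K g"
  shows "H \<inter> K \<subseteq> {\<one>}"
proof
  fix c assume c: "c \<in> H \<inter> K"
  from g obtain h k where hk: "h \<in> H" "k \<in> K" "g = h \<otimes> inv k"
    and unique: "\<And>h'. h' \<in> H \<and> (\<exists>k\<in>K. g = h' \<otimes> inv k) \<Longrightarrow> h' = h"
    unfolding fact_dom_def by blast
  have carr: "h \<in> carrier G" "k \<in> carrier G" "c \<in> carrier G"
    using hk c subgroup.mem_carrier[OF H] subgroup.mem_carrier[OF K] by auto
  have "g = (h \<otimes> c) \<otimes> inv (k \<otimes> c)"
    using hk(3) carr by (simp add: m_assoc inv_mult_group)
  moreover have "h \<otimes> c \<in> H" "k \<otimes> c \<in> K"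
    using hk c subgroup.m_closed[OF H] subgroup.m_closed[OF K] by auto
  ultimately have "h \<otimes> c = h" using unique by blast
  then show "c \<in> {\<one>}" using carr by simp
qed

lemma (in group) plus_part_eq:
  assumes H: "subgroup H G" and K: "subgroup K G" and trivial: "H \<inter> K \<subseteq> {\<one>}"
    and h: "h \<in> H" and k: "k \<in> K"
  shows "fact_dom G H K (h \<otimes> inv k)" and "plus_part G H K (h \<otimes> inv k) = h"
proof -
  have carr: "h \<in> carrier G" "k \<in> carrier G"
    using h k subgroup.mem_carrier[OF H] subgroup.mem_carrier[OF K] by auto
  have unique: "h' = h" if h': "h' \<in> H" "k' \<in> K" "h \<otimes> inv k = h' \<otimes> inv k'" for h' k'
  proof -
    have carr': "h' \<in> carrier G" "k' \<in> carrier G"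
      using h' subgroup.mem_carrier[OF H] subgroup.mem_carrier[OF K] by auto
    have "inv h' \<otimes> h = inv k' \<otimes> k"
    proof -
      have "inv h' \<otimes> (h \<otimes> inv k) \<otimes> k = inv h' \<otimes> (h' \<otimes> inv k') \<otimes> k" using h'(3) by simp
      then show ?thesis using carr carr' by (simp add: m_assoc)
    qed
    moreover have "inv h' \<otimes> h \<in> H" "inv k' \<otimes> k \<in> K"
      using h h' k subgroup.m_closed subgroup.m_inv_closed H K by metis+
    ultimately have "inv h' \<otimes> h = \<one>" using trivial by auto
    then show "h' = h" using carr carr' by (metis inv_equality inv_inv inv_closed)
  qed
  have "h \<in> H \<and> (\<exists>k'\<in>K. h \<otimes> inv k = h \<otimes> inv k')" using h k by blast
  then show "fact_dom G H K (h \<otimes> inv k)" and "plus_part G H K (h \<otimes> inv k) = h"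
    unfolding fact_dom_def plus_part_def using carr unique
    by (auto intro!: the_equality)
qed

locale sym_factorization =
  fixes G (structure) and Gp Gm :: "'a set" and th :: 'a
  assumes sym_factorizable: "sym_factorizable G Gp Gm th"
begin

sublocale group G
  using sym_factorizable unfolding sym_factorizable_def by simp

lemma subgroup_plus: "subgroup Gp G"
  and subgroup_minus: "subgroup Gm G"
  and theta_closed [simp]: "th \<in> carrier G"
  and theta_coset: "th <# Gm = Gp #> th"
  using sym_factorizable unfolding sym_factorizable_def by auto

lemma plus_closed [simp]: "p \<in> Gp \<Longrightarrow> p \<in> carrier G"
  by (rule subgroup.mem_carrier[OF subgroup_plus])

lemma minus_closed [simp]: "m \<in> Gm \<Longrightarrow> m \<in> carrier G"
  by (rule subgroup.mem_carrier[OF subgroup_minus])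

lemma plus_inv_closed [simp]: "p \<in> Gp \<Longrightarrow> inv p \<in> Gp"
  by (rule subgroup.m_inv_closed[OF subgroup_plus])

lemma minus_inv_closed [simp]: "m \<in> Gm \<Longrightarrow> inv m \<in> Gm"
  by (rule subgroup.m_inv_closed[OF subgroup_minus])

lemma plus_mult_closed [simp]: "p \<in> Gp \<Longrightarrow> p' \<in> Gp \<Longrightarrow> p \<otimes> p' \<in> Gp"
  by (rule subgroup.m_closed[OF subgroup_plus])

lemma minus_mult_closed [simp]: "m \<in> Gm \<Longrightarrow> m' \<in> Gm \<Longrightarrow> m \<otimes> m' \<in> Gm"
  by (rule subgroup.m_closed[OF subgroup_minus])

abbreviation \<rho> :: "'a \<Rightarrow> 'a" where "\<rho> \<equiv> rho G Gp Gm th"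
abbreviation dom_\<rho> :: "'a \<Rightarrow> bool" where "dom_\<rho> \<equiv> rho_dom G Gp Gm th"

lemma conj_minus_in_plus: assumes "m \<in> Gm" shows "th \<otimes> m \<otimes> inv th \<in> Gp"
proof -
  have "th \<otimes> m \<in> Gp #> th" using assms theta_coset unfolding l_coset_def by blast
  then obtain p where p: "p \<in> Gp" "th \<otimes> m = p \<otimes> th" unfolding r_coset_def by auto
  then have "th \<otimes> m \<otimes> inv th = p" using assms by (simp add: m_assoc)
  with p show ?thesis by simp
qed

lemma inv_conj_plus_in_minus: assumes "p \<in> Gp" shows "inv th \<otimes> p \<otimes> th \<in> Gm"
proof -
  have "p \<otimes> th \<in> th <# Gm" using assms theta_coset unfolding r_coset_def by blast
  then obtain m where m: "m \<in> Gm" "p \<otimes> th = th \<otimes> m" unfolding l_coset_def by auto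
  then have "inv th \<otimes> p \<otimes> th = m" using assms by (simp add: m_assoc)
  with m show ?thesis by simp
qed

lemma rho_dom_plus: "dom_\<rho> x \<Longrightarrow> x \<in> Gp"
  unfolding rho_dom_def by simp

lemma rho_domE:
  assumes "dom_\<rho> x"
  obtains p m where "p \<in> Gp" "m \<in> Gm" "th \<otimes> x = p \<otimes> inv m"
  using assms unfolding rho_dom_def fact_dom_def by blast

lemma rho_dom_imp_trivial_intersection:
  assumes "dom_\<rho> x" shows "Gp \<inter> Gm \<subseteq> {\<one>}"
  using assms fact_dom_imp_trivial_intersection[OF subgroup_plus subgroup_minus]
  unfolding rho_dom_def by blast

lemma rho_eqI:
  assumes "Gp \<inter> Gm \<subseteq> {\<one>}" and "x \<in> Gp" and "p \<in> Gp" and "m \<in> Gm"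
    and "th \<otimes> x = p \<otimes> inv m"
  shows "dom_\<rho> x" and "\<rho> x = inv p"
  using assms plus_part_eq[OF subgroup_plus subgroup_minus, of p m]
  unfolding rho_dom_def rho_def by simp_all

lemma rho_eq:
  assumes "dom_\<rho> x" and "p \<in> Gp" and "m \<in> Gm" and "th \<otimes> x = p \<otimes> inv m"
  shows "\<rho> x = inv p"
  using rho_eqI(2)[OF rho_dom_imp_trivial_intersection rho_dom_plus] assms by blast

lemma theta_rho_factorization:
  assumes x: "dom_\<rho> x" and "p \<in> Gp" and "m \<in> Gm" and fact: "th \<otimes> x = p \<otimes> inv m"
  shows "th \<otimes> \<rho> x = (th \<otimes> inv m \<otimes> inv th) \<otimes> inv (th \<otimes> x \<otimes> inv th)"
  using conj_factorization[OF theta_closed _ _ _ fact] rho_eq[OF assms] rho_dom_plus[OF x] assms(2,3)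
  by simp

end

locale central_sym_factorization = sym_factorization +
  assumes square_central: "\<forall>g\<in>carrier G. th \<otimes> th \<otimes> g = g \<otimes> (th \<otimes> th)"
begin

lemma inv_conj_eq_conj:
  assumes g: "g \<in> carrier G" shows "inv th \<otimes> g \<otimes> th = th \<otimes> g \<otimes> inv th"
proof -
  have central: "th \<otimes> th \<otimes> g = g \<otimes> (th \<otimes> th)" using square_central g by blast
  have "inv th \<otimes> g \<otimes> th = inv th \<otimes> (g \<otimes> (th \<otimes> th)) \<otimes> inv th"
    using g by (simp add: m_assoc)
  also have "\<dots> = inv th \<otimes> (th \<otimes> th \<otimes> g) \<otimes> inv th" using central by simp
  also have "\<dots> = th \<otimes> g \<otimes> inv th" using g by (simp add: m_assoc)
  finally show ?thesis .
qed

lemma conj_conj: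
  assumes g: "g \<in> carrier G" shows "th \<otimes> (th \<otimes> g \<otimes> inv th) \<otimes> inv th = g"
proof -
  have "th \<otimes> (th \<otimes> g \<otimes> inv th) \<otimes> inv th = th \<otimes> (inv th \<otimes> g \<otimes> th) \<otimes> inv th"
    using g by (simp only: inv_conj_eq_conj)
  also have "\<dots> = g" using g by (simp add: m_assoc)
  finally show ?thesis .
qed

lemma conj_plus_in_minus:
  assumes "p \<in> Gp" shows "th \<otimes> p \<otimes> inv th \<in> Gm"
  using inv_conj_plus_in_minus[OF assms] inv_conj_eq_conj[of p] assms by simp

lemma rho_rho:
  assumes x: "dom_\<rho> x" and p: "p \<in> Gp" and m: "m \<in> Gm" and fact: "th \<otimes> x = p \<otimes> inv m"
  shows "dom_\<rho> (\<rho> x)" and "\<rho> (\<rho> x) = th \<otimes> m \<otimes> inv th"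
proof -
  have "\<rho> x \<in> Gp" using rho_eq[OF assms] p by simp
  moreover have "th \<otimes> inv m \<otimes> inv th \<in> Gp" using m conj_minus_in_plus by simp
  moreover have "th \<otimes> x \<otimes> inv th \<in> Gm" using conj_plus_in_minus rho_dom_plus[OF x] by blast
  ultimately have "dom_\<rho> (\<rho> x)" and "\<rho> (\<rho> x) = inv (th \<otimes> inv m \<otimes> inv th)"
    using rho_eqI[OF rho_dom_imp_trivial_intersection[OF x]] theta_rho_factorization[OF assms]
    by simp_all
  then show "dom_\<rho> (\<rho> x)" and "\<rho> (\<rho> x) = th \<otimes> m \<otimes> inv th"
    using m by (simp_all add: inv_mult_group m_assoc)
qed

lemma rho_cube:
  assumes x: "dom_\<rho> x"
  shows "dom_\<rho> (\<rho> x)" and "dom_\<rho> (\<rho> (\<rho> x))" and "\<rho> (\<rho> (\<rho> x)) = x"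
proof -
  obtain p m where p: "p \<in> Gp" and m: "m \<in> Gm" and fact: "th \<otimes> x = p \<otimes> inv m"
    using x by (rule rho_domE)
  show rho_x: "dom_\<rho> (\<rho> x)" using rho_rho(1)[OF x p m fact] .
  have p': "th \<otimes> inv m \<otimes> inv th \<in> Gp" using m conj_minus_in_plus by simp
  have m': "th \<otimes> x \<otimes> inv th \<in> Gm" using conj_plus_in_minus rho_dom_plus[OF x] by blast
  note rho_rho_x = rho_rho[OF rho_x p' m' theta_rho_factorization[OF x p m fact]]
  show "dom_\<rho> (\<rho> (\<rho> x))" using rho_rho_x(1) .
  show "\<rho> (\<rho> (\<rho> x)) = x"
    using rho_rho_x(2) conj_conj rho_dom_plus[OF x] by simp
qed

lemma rho_inv_eq_rho_rho:
  assumes x: "dom_\<rho> x" shows "rho_inv G Gp Gm th x = \<rho> (\<rho> x)"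
  unfolding rho_inv_def
proof (rule the_equality)
  show "dom_\<rho> (\<rho> (\<rho> x)) \<and> \<rho> (\<rho> (\<rho> x)) = x"
    using rho_cube[OF x] by simp
  show "z = \<rho> (\<rho> x)" if "dom_\<rho> z \<and> \<rho> z = x" for z
    using that rho_cube[of z] by auto
qed

lemma rho_functional_equation:
  assumes x: "dom_\<rho> x" and y: "dom_\<rho> y" and xy: "dom_\<rho> (x \<otimes> y)"
  shows "inv (\<rho> y) \<otimes> \<rho> (\<rho> x \<otimes> inv (\<rho> (x \<otimes> y))) = \<rho> (\<rho> x)"
proof -
  obtain p m where p: "p \<in> Gp" and m: "m \<in> Gm" and fx: "th \<otimes> x = p \<otimes> inv m"
    using x by (rule rho_domE)
  obtain q n where q: "q \<in> Gp" and n: "n \<in> Gm" and fy: "th \<otimes> y = q \<otimes> inv n"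
    using y by (rule rho_domE)
  obtain r k where r: "r \<in> Gp" and k: "k \<in> Gm" and fxy: "th \<otimes> (x \<otimes> y) = r \<otimes> inv k"
    using xy by (rule rho_domE)
  have carrier: "x \<in> carrier G" "y \<in> carrier G" using rho_dom_plus x y by simp_all
  have "p = th \<otimes> x \<otimes> m" "q = th \<otimes> y \<otimes> n" "r = th \<otimes> (x \<otimes> y) \<otimes> k"
    using fx fy fxy p q r m n k carrier by (simp_all add: inv_solve_right)
  then have fact: "th \<otimes> (inv p \<otimes> r) = (th \<otimes> inv m \<otimes> inv th \<otimes> q) \<otimes> inv (inv k \<otimes> n)"
    using carrier m n k by (simp add: m_assoc inv_mult_group)
  have "th \<otimes> inv m \<otimes> inv th \<otimes> q \<in> Gp" using conj_minus_in_plus m q by simp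
  then have "\<rho> (inv p \<otimes> r) = inv (th \<otimes> inv m \<otimes> inv th \<otimes> q)"
    using rho_eqI(2)[OF rho_dom_imp_trivial_intersection[OF x] _ _ _ fact] p r k n by simp
  moreover have "\<rho> x \<otimes> inv (\<rho> (x \<otimes> y)) = inv p \<otimes> r"
    using rho_eq[OF x p m fx] rho_eq[OF xy r k fxy] r by simp
  ultimately show ?thesis
    using rho_eq[OF y q n fy] rho_rho(2)[OF x p m fx] q m by (simp add: inv_mult_group m_assoc)
qed

end

theorem mainTheorem8:
  fixes G :: "('a, 'b) monoid_scheme" and Gp Gm :: "'a set" and th :: 'a
  assumes sf: "sym_factorizable G Gp Gm th"
    and central: "\<forall>g\<in>carrier G. th \<otimes>\<^bsub>G\<^esub> th \<otimes>\<^bsub>G\<^esub> g = g \<otimes>\<^bsub>G\<^esub> (th \<otimes>\<^bsub>G\<^esub> th)"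
  shows "(\<forall>x y. rho_dom G Gp Gm th x \<and> rho_dom G Gp Gm th y
            \<and> rho_dom G Gp Gm th (x \<otimes>\<^bsub>G\<^esub> y)
            \<and> rho_dom G Gp Gm th (rho G Gp Gm th x \<otimes>\<^bsub>G\<^esub> inv\<^bsub>G\<^esub> (rho G Gp Gm th (x \<otimes>\<^bsub>G\<^esub> y)))
          \<longrightarrow> inv\<^bsub>G\<^esub> (rho G Gp Gm th y) \<otimes>\<^bsub>G\<^esub>
                rho G Gp Gm th (rho G Gp Gm th x \<otimes>\<^bsub>G\<^esub> inv\<^bsub>G\<^esub> (rho G Gp Gm th (x \<otimes>\<^bsub>G\<^esub> y)))
              = rho_inv G Gp Gm th x)
       \<and> (\<forall>x. rho_dom G Gp Gm th x
          \<longrightarrow> rho_dom G Gp Gm th (rho G Gp Gm th x)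
            \<and> rho_dom G Gp Gm th (rho G Gp Gm th (rho G Gp Gm th x))
            \<and> rho G Gp Gm th (rho G Gp Gm th (rho G Gp Gm th x)) = x)"
proof -
  interpret central_sym_factorization G Gp Gm th
    using sf central by unfold_locales
  show ?thesis
    using rho_functional_equation rho_inv_eq_rho_rho rho_cube by simp
qed

end
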